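(* Fix integers $1\le N_c\le N_f$, Zipf exponent $\delta>0$ with $p_f=f^{-\delta}/\sum_{n=1}^{N_f}n^{-\delta}$, and parameters $\alpha>2$, integer $M_1\ge1$, $B_{12}>0$, $W>0$, $R_0\ge0$; put $\gamma_0=2^{R_0/W}-1$. For $\lambda_{12}>0$, $P_{12}>0$ let $\mathsf C_1=\mathsf C_1(\lambda_{12},P_{12})=\lambda_{12}(P_{12}B_{12})^{2/\alpha}\,{}_2F_1[-\tfrac2\alpha,M_1;1-\tfrac2\alpha;-\tfrac{\gamma_0}{M_1B_{12}}]$ and let $\mathbf q^*=(q^*_f)_f$ be the maximizer of $\sum_{f=1}^{N_f}\frac{p_fq_f}{\mathsf C_1+q_f}$ over $\{\mathbf q\in[0,1]^{N_f}:\sum_fq_f\le N_c\}$, i.e. $q^*_f=\big[\frac{\sqrt{\mathsf C_1}}{\sqrt\nu}\sqrt{p_f}-\mathsf C_1\big]_0^1$ with $\nu>0$ such that $\sum_fq^*_f=N_c$. Then $q^*_f-q^*_{f+1}$ increases with $\lambda_{12}$ and with $P_{12}$: if $(\lambda_{12},P_{12})$ and $(\lambda'_{12},P'_{12})$ satisfy $\lambda_{12}\le\lambda'_{12}$, $P_{12}\le P'_{12}$ with at least one inequality strict, and $f\in\{1,\dots,N_f-1\}$ is such that $q^*_f,q^*_{f+1}\in(0,1)$ under both parameter choices, then $q^*_f-q^*_{f+1}$ is strictly larger under $(\lambda'_{12},P'_{12})$ than under $(\lambda_{12},P_{12})$.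
   Context: $[x]_0^1=\max\{\min\{x,1\},0\}$; ${}_2F_1$ is the Gauss hypergeometric function. $\lambda_{12}=\lambda_1/\lambda_2$ and $P_{12}=P_1/P_2$ are the macro-to-helper density and transmit power ratios, $B_{12}$ the bias ratio, $M_1$ the number of macro BS antennas. The objective is the helper-tier success probability in the low-user-density regime (each helper serves at most one user and helper activity probability tends to 0), and $\mathbf q^*$ is the optimal helper caching probability vector. *)

theory Defs
  imports "HOL-Analysis.Analysis"
begin

definition hyp2F1_series :: "real \<Rightarrow> real \<Rightarrow> real \<Rightarrow> real \<Rightarrow> real" where
  "hyp2F1_series a b c z =
     (\<Sum>n. pochhammer a n * pochhammer b n / pochhammer c n * z ^ n / fact n)"

text \<open>Gauss hypergeometric function on real arguments z < 1: the power series for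
  abs z < 1, and for z \<le> -1 its analytic continuation given by the Pfaff transformation
  2F1(a,b;c;z) = (1-z) powr (-a) * 2F1(a,c-b;c;z/(z-1)).  (Values for z \<ge> 1 are
  irrelevant here and set to 0.)\<close>
definition hyp2F1 :: "real \<Rightarrow> real \<Rightarrow> real \<Rightarrow> real \<Rightarrow> real" where
  "hyp2F1 a b c z =
     (if \<bar>z\<bar> < 1 then hyp2F1_series a b c z
      else if z \<le> -1 then (1 - z) powr (-a) * hyp2F1_series a (c - b) c (z / (z - 1))
      else 0)"

definition zipf :: "real \<Rightarrow> nat \<Rightarrow> nat \<Rightarrow> real" where
  "zipf \<delta> Nf f = (real f) powr (-\<delta>) / (\<Sum>n=1..Nf. (real n) powr (-\<delta>))"

definition gamma0 :: "real \<Rightarrow> real \<Rightarrow> real" where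
  "gamma0 R0 W = 2 powr (R0 / W) - 1"

definition C1 :: "real \<Rightarrow> nat \<Rightarrow> real \<Rightarrow> real \<Rightarrow> real \<Rightarrow> real \<Rightarrow> real \<Rightarrow> real" where
  "C1 \<alpha> M1 B12 W R0 lam12 P12 =
     lam12 * (P12 * B12) powr (2 / \<alpha>) *
     hyp2F1 (-2 / \<alpha>) (real M1) (1 - 2 / \<alpha>) (- gamma0 R0 W / (real M1 * B12))"

definition objective :: "real \<Rightarrow> nat \<Rightarrow> real \<Rightarrow> (nat \<Rightarrow> real) \<Rightarrow> real" where
  "objective \<delta> Nf C q = (\<Sum>f=1..Nf. zipf \<delta> Nf f * q f / (C + q f))"

definition feasible :: "nat \<Rightarrow> nat \<Rightarrow> (nat \<Rightarrow> real) \<Rightarrow> bool" where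
  "feasible Nf Nc q \<longleftrightarrow> (\<forall>f\<in>{1..Nf}. 0 \<le> q f \<and> q f \<le> 1) \<and> (\<Sum>f=1..Nf. q f) \<le> real Nc"

definition is_optimal :: "real \<Rightarrow> nat \<Rightarrow> nat \<Rightarrow> real \<Rightarrow> (nat \<Rightarrow> real) \<Rightarrow> bool" where
  "is_optimal \<delta> Nf Nc C q \<longleftrightarrow> feasible Nf Nc q \<and>
     (\<forall>q'. feasible Nf Nc q' \<longrightarrow> objective \<delta> Nf C q' \<le> objective \<delta> Nf C q)"

end

theory Submission
  imports Defs
begin

text \<open>The gap \<open>q\<^sub>f - q\<^sub>f\<^sub>+\<^sub>1\<close> between two interior entries of an optimal caching
  vector is \<open>\<mu> (\<surd>p\<^sub>f - \<surd>p\<^sub>f\<^sub>+\<^sub>1)\<close>, where \<open>q\<^sub>g = [\<mu> \<surd>p\<^sub>g - C]\<^sub>0\<^sup>1\<close> is the water-filling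
  form forced by exchange arguments. Raising \<open>C\<close> must raise the level \<open>\<mu>\<close>: otherwise every
  entry would weakly drop and the binding budget \<open>\<Sum> q\<^sub>g = N\<^sub>c\<close> would be violated. Finally
  \<open>C\<^sub>1\<close> is strictly increasing in \<open>(\<lambda>\<^sub>1\<^sub>2, P\<^sub>1\<^sub>2)\<close> because its hypergeometric factor
  \<open>\<^sub>2F\<^sub>1(a, M\<^sub>1; 1 + a; z)\<close>, with \<open>a = -2/\<alpha> \<in> (-1, 0)\<close> and \<open>z \<le> 0\<close>, is at least \<open>1\<close>.\<close>

lemma pochhammer_div_pochhammer_plus_one:
  fixes a :: real
  assumes "-1 < a" "a < 0"
  shows "pochhammer a n / pochhammer (1 + a) n = a / (a + real n)"
proof -
  have "pochhammer (a + 1) n > 0" by (rule pochhammer_pos) (use assms in auto)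
  moreover have "pochhammer a n * (a + real n) = a * pochhammer (a + 1) n"
    using pochhammer_Suc[of a n] pochhammer_rec[of a n] by simp
  moreover have "a + real n \<noteq> 0" using assms by (cases n) auto
  ultimately show ?thesis by (simp add: field_simps add.commute)
qed

lemma binomial_series_pochhammer:
  fixes e w :: real
  assumes "\<bar>w\<bar> < 1"
  shows "(\<lambda>n. pochhammer e n / fact n * w ^ n) sums (1 - w) powr (-e)"
proof -
  have "(\<lambda>n. ((-e) gchoose n) * (-w) ^ n) sums (1 + -w) powr (-e)"
    by (rule gen_binomial_real) (use assms in auto)
  moreover have "((-e) gchoose n) * (-w) ^ n = pochhammer e n / fact n * w ^ n" for n
  proof -
    have "((-e) gchoose n) * (-w) ^ n = ((-1) ^ n * (-1) ^ n) * (pochhammer e n / fact n * w ^ n)"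
      by (simp add: gbinomial_pochhammer power_minus[of w])
    also have "(-1::real) ^ n * (-1) ^ n = 1" by (simp flip: power_mult_distrib)
    finally show ?thesis by simp
  qed
  ultimately show ?thesis by simp
qed

definition hyp2F1_shift_coeff :: "real \<Rightarrow> real \<Rightarrow> nat \<Rightarrow> real" where
  "hyp2F1_shift_coeff a b n = a / (a + real n) * (pochhammer b n / fact n)"

lemma hyp2F1_series_shift:
  assumes "-1 < a" "a < 0"
  shows "hyp2F1_series a b (1 + a) z = (\<Sum>n. hyp2F1_shift_coeff a b n * z ^ n)"
proof -
  have "pochhammer a n * pochhammer b n / pochhammer (1 + a) n * z ^ n / fact n
      = hyp2F1_shift_coeff a b n * z ^ n" for n
  proof -
    have "pochhammer a n * pochhammer b n / pochhammer (1 + a) n * z ^ n / fact n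
        = pochhammer a n / pochhammer (1 + a) n * (pochhammer b n / fact n) * z ^ n"
      by simp
    then show ?thesis
      by (simp add: pochhammer_div_pochhammer_plus_one[OF assms] hyp2F1_shift_coeff_def)
  qed
  then show ?thesis by (simp add: hyp2F1_series_def)
qed

lemma summable_hyp2F1_shift:
  assumes "-1 < a" "a < 0" "\<bar>z\<bar> < 1"
  shows "summable (\<lambda>n. hyp2F1_shift_coeff a b n * z ^ n)"
proof -
  define r where "r = (1 + \<bar>z\<bar>) / 2"
  have r: "\<bar>z\<bar> < r" "r < 1" using assms by (auto simp: r_def)
  have "summable (\<lambda>n. pochhammer b n / fact n * r ^ n)"
    using binomial_series_pochhammer[of r b] r by (auto simp: sums_iff)
  then have abs: "summable (\<lambda>n. norm (pochhammer b n / fact n * z ^ n))"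
    by (rule powser_insidea) (use r in auto)
  have "\<bar>a / (a + real n)\<bar> \<le> 1 / (1 + a)" for n
  proof (cases n)
    case 0
    then show ?thesis using assms by (simp add: field_simps)
  next
    case (Suc m)
    then have "\<bar>a / (a + real n)\<bar> = - a / (a + real n)"
      using assms by (simp add: abs_div_pos)
    also have "\<dots> \<le> 1 / (a + real n)" using assms Suc by (intro divide_right_mono) auto
    also have "\<dots> \<le> 1 / (1 + a)" using assms Suc by (intro divide_left_mono) auto
    finally show ?thesis .
  qed
  then have "norm (hyp2F1_shift_coeff a b n * z ^ n)
      \<le> 1 / (1 + a) * norm (pochhammer b n / fact n * z ^ n)" for n
    unfolding hyp2F1_shift_coeff_def norm_mult mult.assoc [symmetric]
    by (intro mult_right_mono) (auto simp: abs_mult)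
  then show ?thesis
    by (rule summable_comparison_test' [OF summable_mult [OF abs, of "1 / (1 + a)"]])
qed

lemma hyp2F1_series_shift_ode:
  assumes "-1 < a" "a < 0" "\<bar>z\<bar> < 1"
  obtains D where "(hyp2F1_series a b (1 + a) has_real_derivative D) (at z)"
    and "z * D + a * hyp2F1_series a b (1 + a) z = a * (1 - z) powr (-b)"
proof -
  define c where "c = hyp2F1_shift_coeff a b"
  have h: "hyp2F1_series a b (1 + a) = (\<lambda>z. \<Sum>n. c n * z ^ n)"
    using hyp2F1_series_shift[OF assms(1,2)] by (auto simp: c_def)
  have sm: "\<And>z. norm z < 1 \<Longrightarrow> summable (\<lambda>n. c n * z ^ n)"
    using summable_hyp2F1_shift[OF assms(1,2)] by (simp add: c_def)
  define D where "D = (\<Sum>n. diffs c n * z ^ n)"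
  have deriv: "(hyp2F1_series a b (1 + a) has_real_derivative D) (at z)"
    unfolding h D_def by (rule termdiffs_strong') (use assms sm in auto)
  have "(\<lambda>n. diffs c n * z ^ n) sums D"
    unfolding D_def by (rule summable_sums, rule termdiff_converges[of z 1]) (use assms sm in auto)
  then have "(\<lambda>n. real (Suc n) * c (Suc n) * z ^ Suc n) sums (z * D)"
    using sums_mult[of _ D z] by (simp add: diffs_def mult_ac)
  then have "(\<lambda>n. real n * c n * z ^ n) sums (z * D)"
    using sums_Suc_iff[of "\<lambda>n. real n * c n * z ^ n" "z * D"] by simp
  moreover have "(\<lambda>n. a * (c n * z ^ n)) sums (a * hyp2F1_series a b (1 + a) z)"
    unfolding h by (rule sums_mult, rule summable_sums, rule sm) (use assms in auto)
  ultimately have "(\<lambda>n. real n * c n * z ^ n + a * (c n * z ^ n))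
      sums (z * D + a * hyp2F1_series a b (1 + a) z)"
    by (rule sums_add)
  moreover have "real n * c n * z ^ n + a * (c n * z ^ n) = a * (pochhammer b n / fact n * z ^ n)" for n
  proof -
    have "a + real n \<noteq> 0" using assms by (cases n) auto
    then have "(real n + a) * (a / (a + real n)) = a" by (simp add: add.commute)
    moreover have "real n * c n * z ^ n + a * (c n * z ^ n)
        = (real n + a) * (a / (a + real n)) * (pochhammer b n / fact n * z ^ n)"
      by (simp add: c_def hyp2F1_shift_coeff_def algebra_simps add_divide_distrib)
    ultimately show ?thesis by simp
  qed
  ultimately have "(\<lambda>n. a * (pochhammer b n / fact n * z ^ n))
      sums (z * D + a * hyp2F1_series a b (1 + a) z)"
    by simp
  moreover have "(\<lambda>n. a * (pochhammer b n / fact n * z ^ n)) sums (a * (1 - z) powr (-b))"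
    by (rule sums_mult, rule binomial_series_pochhammer) (use assms in auto)
  ultimately show ?thesis using that[OF deriv] sums_unique2 by blast
qed

lemma hyp2F1_series_shift_ode_dilated:
  assumes "-1 < a" "a < 0" "\<bar>s * w\<bar> < 1"
  obtains D where "((\<lambda>s. hyp2F1_series a b (1 + a) (s * w)) has_real_derivative D * w) (at s)"
    and "s * w * D + a * hyp2F1_series a b (1 + a) (s * w) = a * (1 - s * w) powr (-b)"
proof -
  obtain D where D: "(hyp2F1_series a b (1 + a) has_real_derivative D) (at (s * w))"
    and ode: "s * w * D + a * hyp2F1_series a b (1 + a) (s * w) = a * (1 - s * w) powr (-b)"
    using hyp2F1_series_shift_ode[OF assms] by blast
  have "((\<lambda>s. hyp2F1_series a b (1 + a) (s * w)) has_real_derivative D * w) (at s)"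
    by (rule DERIV_chain2[where g = "\<lambda>s. s * w", OF D]) (auto intro!: derivative_eq_intros)
  with ode that show ?thesis by blast
qed

lemma tendsto_hyp2F1_series_shift_dilated:
  assumes a: "-1 < a" "a < 0"
  shows "((\<lambda>s. s powr a * (hyp2F1_series a b (1 + a) (s * w) - 1)) \<longlongrightarrow> 0) (at_right 0)"
proof -
  let ?h = "hyp2F1_series a b (1 + a)"
  have h0: "?h 0 = 1"
    using a unfolding hyp2F1_series_shift[OF a] powser_zero by (simp add: hyp2F1_shift_coeff_def)
  obtain D where "((\<lambda>s. ?h (s * w)) has_real_derivative D * w) (at 0)"
    using hyp2F1_series_shift_ode_dilated[OF a, of 0 w] by auto
  then have "((\<lambda>s. ?h (s * w)) has_real_derivative D * w) (at_right 0)"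
    by (rule has_field_derivative_at_within)
  then have "((\<lambda>s. (?h (s * w) - 1) / s) \<longlongrightarrow> D * w) (at_right 0)"
    using h0 by (simp add: has_field_derivative_iff)
  moreover have "((\<lambda>s. s powr (1 + a)) \<longlongrightarrow> 0) (at_right 0)"
    by (rule tendsto_zero_powrI)
      (use a in \<open>auto intro!: tendsto_eq_intros eventually_at_rightI[of 0 1]\<close>)
  ultimately have "((\<lambda>s. s powr (1 + a) * ((?h (s * w) - 1) / s)) \<longlongrightarrow> 0 * (D * w)) (at_right 0)"
    by (intro tendsto_mult)
  moreover have "\<forall>\<^sub>F s in at_right 0. s powr (1 + a) * ((?h (s * w) - 1) / s)
      = s powr a * (?h (s * w) - 1)"
    by (rule eventually_at_rightI[of 0 1]) (auto simp: powr_add)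
  ultimately show ?thesis by (simp add: tendsto_cong)
qed

text \<open>The function \<open>u s = s\<^sup>a (h (s w) - 1)\<close> has derivative \<open>a s\<^sup>a\<^sup>-\<^sup>1 ((1 - s w)\<^sup>-\<^sup>b - 1) \<ge> 0\<close>
  by the differential equation, and tends to \<open>0\<close> as \<open>s \<rightarrow> 0\<^sup>+\<close>; so \<open>u 1 \<ge> 0\<close>.\<close>
lemma hyp2F1_series_shift_ge_one:
  assumes a: "-1 < a" "a < 0" and w: "\<bar>w\<bar> < 1"
    and le1: "\<And>s. 0 \<le> s \<Longrightarrow> s \<le> 1 \<Longrightarrow> (1 - s * w) powr (-b) \<le> 1"
  shows "1 \<le> hyp2F1_series a b (1 + a) w"
proof -
  define h where "h = hyp2F1_series a b (1 + a)"
  define u where "u s = s powr a * (h (s * w) - 1)" for s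
  have u_mono: "u s \<le> u 1" if s: "0 < s" "s \<le> 1" for s
  proof (rule DERIV_nonneg_imp_nondecreasing[OF s(2)])
    fix x assume x: "s \<le> x" "x \<le> 1"
    have "x * \<bar>w\<bar> \<le> \<bar>w\<bar>" using x s by (intro mult_left_le_one_le) auto
    then have "\<bar>x * w\<bar> < 1" using x s w by (simp add: abs_mult)
    then obtain D where D: "((\<lambda>s. h (s * w)) has_real_derivative D * w) (at x)"
      and ode: "x * w * D + a * h (x * w) = a * (1 - x * w) powr (-b)"
      using hyp2F1_series_shift_ode_dilated[OF a] unfolding h_def by blast
    have "(u has_real_derivative a * x powr (a - 1) * (h (x * w) - 1) + x powr a * (D * w)) (at x)"
      unfolding u_def using D x s by (auto intro!: derivative_eq_intros)
    moreover have "a * x powr (a - 1) * (h (x * w) - 1) + x powr a * (D * w)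
        = x powr (a - 1) * (a * ((1 - x * w) powr (-b) - 1))"
    proof -
      have "x powr a = x powr (a - 1) * x" using x s by (simp add: powr_diff)
      then have "a * x powr (a - 1) * (h (x * w) - 1) + x powr a * (D * w)
          = x powr (a - 1) * (x * w * D + a * h (x * w) - a)"
        by (simp add: algebra_simps)
      then show ?thesis unfolding ode by (simp add: algebra_simps)
    qed
    moreover have "0 \<le> x powr (a - 1) * (a * ((1 - x * w) powr (-b) - 1))"
      using le1[of x] x s a by (intro mult_nonneg_nonneg mult_nonpos_nonpos) auto
    ultimately show "\<exists>y. (u has_real_derivative y) (at x) \<and> 0 \<le> y" by auto
  qed
  have "(u \<longlongrightarrow> 0) (at_right 0)"
    unfolding u_def h_def by (rule tendsto_hyp2F1_series_shift_dilated[OF a])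
  then have "0 \<le> u 1"
    by (rule tendsto_le[OF _ tendsto_const, rotated])
      (auto intro!: eventually_at_rightI[of 0 1] u_mono)
  then show ?thesis by (simp add: u_def h_def)
qed

lemma hyp2F1_shift_ge_one:
  assumes a: "-1 < a" "a < 0" and b: "1 + a \<le> b" and z: "z \<le> 0"
  shows "1 \<le> hyp2F1 a b (1 + a) z"
proof (cases "-1 < z")
  case True
  have "1 \<le> hyp2F1_series a b (1 + a) z"
  proof (rule hyp2F1_series_shift_ge_one[OF a])
    show "\<bar>z\<bar> < 1" using True z by simp
    fix s :: real assume s: "0 \<le> s" "s \<le> 1"
    have "(1 - s * z) powr (-b) \<le> (1 - s * z) powr 0"
      using s z a b by (intro powr_mono) (auto simp: mult_nonneg_nonpos)
    moreover have "s * z \<le> 0" using s z by (simp add: mult_nonneg_nonpos)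
    ultimately show "(1 - s * z) powr (-b) \<le> 1" by simp
  qed
  then show ?thesis using True z by (simp add: hyp2F1_def)
next
  case False
  define w where "w = z / (z - 1)"
  have w: "0 \<le> w" "w < 1" using False by (auto simp: w_def field_simps)
  have "1 \<le> hyp2F1_series a (1 + a - b) (1 + a) w"
  proof (rule hyp2F1_series_shift_ge_one[OF a])
    show "\<bar>w\<bar> < 1" using w by simp
    fix s :: real assume s: "0 \<le> s" "s \<le> 1"
    have "s * w \<le> 1" using s w by (simp add: mult_le_one)
    then show "(1 - s * w) powr (- (1 + a - b)) \<le> 1"
      using s w b by (intro powr_le1) auto
  qed
  moreover have "1 \<le> (1 - z) powr (-a)"
    using False a by (intro ge_one_powr_ge_zero) auto
  ultimately have "1 \<le> (1 - z) powr (-a) * hyp2F1_series a (1 + a - b) (1 + a) w"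
    using mult_mono[of 1 "(1 - z) powr (-a)" 1] by fastforce
  then show ?thesis using False by (simp add: hyp2F1_def w_def)
qed

lemma zipf_pos:
  assumes "1 \<le> g" "1 \<le> Nf"
  shows "0 < zipf \<delta> Nf g"
proof -
  have "0 < (\<Sum>n=1..Nf. real n powr (-\<delta>))" using assms by (intro sum_pos) auto
  then show ?thesis using assms by (simp add: zipf_def)
qed

lemma zipf_Suc_less:
  assumes "1 \<le> g" "1 \<le> Nf" "0 < \<delta>"
  shows "zipf \<delta> Nf (Suc g) < zipf \<delta> Nf g"
proof -
  have "0 < (\<Sum>n=1..Nf. real n powr (-\<delta>))" using assms by (intro sum_pos) auto
  moreover have "real (Suc g) powr (-\<delta>) < real g powr (-\<delta>)"
    using assms by (intro powr_less_mono2_neg) auto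
  ultimately show ?thesis by (simp add: zipf_def divide_strict_right_mono)
qed

lemma sum_fun_upd:
  fixes q :: "'a \<Rightarrow> 'b::ab_group_add"
  assumes "finite A" "i \<in> A"
  shows "sum (q(i := x)) A = sum q A - q i + x"
proof -
  have "sum (q(i := x)) A = x + sum q (A - {i})"
    using assms by (simp add: sum.remove[of A i] sum.cong[of "A - {i}" "A - {i}" "q(i := x)" q])
  also have "\<dots> = sum q A - q i + x"
    using assms by (simp add: sum.remove[of A i])
  finally show ?thesis .
qed

lemma objective_fun_upd:
  assumes "i \<in> {1..Nf}"
  shows "objective \<delta> Nf C (q(i := x))
    = objective \<delta> Nf C q + zipf \<delta> Nf i * (x / (C + x) - q i / (C + q i))"
proof -
  let ?F = "\<lambda>g. zipf \<delta> Nf g * q g / (C + q g)"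
  have "objective \<delta> Nf C (q(i := x)) = sum (?F(i := zipf \<delta> Nf i * x / (C + x))) {1..Nf}"
    unfolding objective_def by (intro sum.cong) auto
  also have "\<dots> = sum ?F {1..Nf} - ?F i + zipf \<delta> Nf i * x / (C + x)"
    by (rule sum_fun_upd) (use assms in auto)
  finally show ?thesis by (simp add: objective_def right_diff_distrib)
qed

lemma fraction_increment:
  fixes C x t :: real
  assumes "0 < C + x" "0 < C + x + t"
  shows "(x + t) / (C + x + t) - x / (C + x) = t * C / ((C + x) * (C + x + t))"
  using assms by (simp add: field_simps)

lemma feasible_bounds:
  assumes "feasible Nf Nc q" "g \<in> {1..Nf}"
  shows "0 \<le> q g" "q g \<le> 1"
  using assms by (auto simp: feasible_def)

text \<open>Shift a small mass \<open>t\<close> from \<open>q j\<close> to \<open>q i\<close>, compare objectives and let \<open>t \<rightarrow> 0\<^sup>+\<close>.\<close>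
lemma optimal_exchange:
  assumes C: "0 < C" and opt: "is_optimal \<delta> Nf Nc C q"
    and ij: "i \<in> {1..Nf}" "j \<in> {1..Nf}" "i \<noteq> j" and q: "q i < 1" "0 < q j"
  shows "zipf \<delta> Nf i / (C + q i)\<^sup>2 \<le> zipf \<delta> Nf j / (C + q j)\<^sup>2"
proof -
  let ?p = "zipf \<delta> Nf"
  have feas: "feasible Nf Nc q" using opt by (simp add: is_optimal_def)
  have qi: "0 \<le> q i" and qj: "q j \<le> 1" using feasible_bounds[OF feas] ij by auto
  define m where "m = min (1 - q i) (q j)"
  have m: "0 < m" using q by (simp add: m_def)
  define L where "L t = ?p i / ((C + q i) * (C + q i + t))" for t
  define R where "R t = ?p j / ((C + q j) * (C + q j - t))" for t
  have LR: "L t \<le> R t" if t: "0 < t" "t < m" for t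
  proof -
    define qt where "qt = q(i := q i + t, j := q j - t)"
    have "feasible Nf Nc qt"
      unfolding feasible_def
    proof
      show "\<forall>g\<in>{1..Nf}. 0 \<le> qt g \<and> qt g \<le> 1"
      proof
        fix g assume "g \<in> {1..Nf}"
        then show "0 \<le> qt g \<and> qt g \<le> 1"
          using feasible_bounds[OF feas, of g] t qi qj by (auto simp: qt_def m_def)
      qed
      have "(\<Sum>g=1..Nf. qt g) = (\<Sum>g=1..Nf. q g)"
        unfolding qt_def sum_fun_upd[OF finite_atLeastAtMost ij(2)]
          sum_fun_upd[OF finite_atLeastAtMost ij(1)]
        using ij by simp
      then show "(\<Sum>g=1..Nf. qt g) \<le> real Nc" using feas by (simp add: feasible_def)
    qed
    then have "objective \<delta> Nf C qt \<le> objective \<delta> Nf C q"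
      using opt by (simp add: is_optimal_def)
    moreover have "objective \<delta> Nf C qt = objective \<delta> Nf C q + t * C * (L t - R t)"
    proof -
      have di: "(q i + t) / (C + (q i + t)) - q i / (C + q i) = t * C / ((C + q i) * (C + q i + t))"
        using fraction_increment[of C "q i" t] C t qi by (simp add: add.assoc)
      have dj: "(q j - t) / (C + (q j - t)) - q j / (C + q j) = - (t * C / ((C + q j) * (C + q j - t)))"
        using fraction_increment[of C "q j - t" t] C t q by (simp add: m_def algebra_simps)
      have "objective \<delta> Nf C qt = objective \<delta> Nf C q
          + ?p i * ((q i + t) / (C + (q i + t)) - q i / (C + q i))
          + ?p j * ((q j - t) / (C + (q j - t)) - q j / (C + q j))"
        using ij by (simp add: qt_def objective_fun_upd)
      then show ?thesis unfolding di dj by (simp add: L_def R_def algebra_simps)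
    qed
    ultimately have "t * C * (L t - R t) \<le> 0" by simp
    then show ?thesis using t C by (simp add: mult_le_0_iff)
  qed
  have "C + q i \<noteq> 0" "C + q j \<noteq> 0" using C qi q by auto
  then have "(L \<longlongrightarrow> L 0) (at_right 0)" "(R \<longlongrightarrow> R 0) (at_right 0)"
    unfolding L_def R_def by (auto intro!: tendsto_eq_intros)
  moreover have "\<forall>\<^sub>F t in at_right 0. L t \<le> R t"
    by (rule eventually_at_rightI[of 0 m]) (use m LR in auto)
  ultimately have "L 0 \<le> R 0" by (intro tendsto_le[of "at_right 0"]) auto
  then show ?thesis by (simp add: L_def R_def power2_eq_square)
qed

lemma optimal_budget_binding:
  assumes C: "0 < C" and opt: "is_optimal \<delta> Nf Nc C q"
    and f: "f \<in> {1..Nf}" "q f < 1"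
  shows "(\<Sum>g=1..Nf. q g) = real Nc"
proof (rule ccontr)
  assume "(\<Sum>g=1..Nf. q g) \<noteq> real Nc"
  moreover have feas: "feasible Nf Nc q" using opt by (simp add: is_optimal_def)
  ultimately have slack: "(\<Sum>g=1..Nf. q g) < real Nc" by (simp add: feasible_def)
  define t where "t = min (1 - q f) (real Nc - (\<Sum>g=1..Nf. q g))"
  have t: "0 < t" using slack f by (simp add: t_def)
  have qf: "0 \<le> q f" using feasible_bounds[OF feas f(1)] by simp
  define qt where "qt = q(f := q f + t)"
  have "feasible Nf Nc qt"
    unfolding feasible_def
  proof
    show "\<forall>g\<in>{1..Nf}. 0 \<le> qt g \<and> qt g \<le> 1"
    proof
      fix g assume "g \<in> {1..Nf}"
      then show "0 \<le> qt g \<and> qt g \<le> 1"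
        using feasible_bounds[OF feas, of g] t qf by (auto simp: qt_def t_def)
    qed
    show "(\<Sum>g=1..Nf. qt g) \<le> real Nc"
      unfolding qt_def sum_fun_upd[OF finite_atLeastAtMost f(1)] by (simp add: t_def)
  qed
  then have "objective \<delta> Nf C qt \<le> objective \<delta> Nf C q"
    using opt by (simp add: is_optimal_def)
  moreover have "(q f + t) / (C + (q f + t)) - q f / (C + q f) = t * C / ((C + q f) * (C + q f + t))"
    using fraction_increment[of C "q f" t] C t qf by (simp add: add.assoc)
  then have "objective \<delta> Nf C qt
      = objective \<delta> Nf C q + zipf \<delta> Nf f * (t * C / ((C + q f) * (C + q f + t)))"
    using f by (simp add: qt_def objective_fun_upd)
  moreover have "0 < zipf \<delta> Nf f * (t * C / ((C + q f) * (C + q f + t)))"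
    using zipf_pos[of f Nf \<delta>] f t C qf by simp
  ultimately show False by simp
qed

lemma sqrt_div_le_sqrt_div:
  fixes p p' x x' :: real
  assumes "0 \<le> p" "0 < x" "0 < x'" "p / x\<^sup>2 \<le> p' / x'\<^sup>2"
  shows "sqrt p / x \<le> sqrt p' / x'"
proof -
  have "sqrt (p / x\<^sup>2) \<le> sqrt (p' / x'\<^sup>2)" using assms(4) by (rule real_sqrt_le_mono)
  then show ?thesis using assms by (simp add: real_sqrt_divide)
qed

text \<open>This is the water-filling form \<open>q\<^sub>g = [\<mu> \<surd>p\<^sub>g - C]\<^sub>0\<^sup>1\<close> of the optimal caching
  probabilities (the paper's \<open>\<mu> = \<surd>(C / \<nu>)\<close>), with the water level read off an interior entry.\<close>
lemma optimal_water_filling: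
  assumes C: "0 < C" and opt: "is_optimal \<delta> Nf Nc C q"
    and f: "f \<in> {1..Nf}" "0 < q f" "q f < 1"
  obtains \<mu> where "\<And>g. g \<in> {1..Nf} \<Longrightarrow> q g = max 0 (min (\<mu> * sqrt (zipf \<delta> Nf g) - C) 1)"
proof
  define \<mu> where "\<mu> = (C + q f) / sqrt (zipf \<delta> Nf f)"
  fix g assume g: "g \<in> {1..Nf}"
  have feas: "feasible Nf Nc q" using opt by (simp add: is_optimal_def)
  have Xf: "0 < C + q f" and Xg: "0 < C + q g"
    using C feasible_bounds[OF feas] f g by (auto intro: add_pos_nonneg)
  have sf: "0 < sqrt (zipf \<delta> Nf f)" and pg: "0 < zipf \<delta> Nf g"
    using f g zipf_pos by auto
  have level_f: "\<mu> * sqrt (zipf \<delta> Nf f) = C + q f" using sf by (simp add: \<mu>_def)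
  have "\<mu> * sqrt (zipf \<delta> Nf g) - C \<le> q g" if "q g < 1"
  proof (cases "g = f")
    case False
    have "sqrt (zipf \<delta> Nf g) / (C + q g) \<le> sqrt (zipf \<delta> Nf f) / (C + q f)"
      using optimal_exchange[OF C opt g f(1) False that f(2)] Xf Xg pg
      by (intro sqrt_div_le_sqrt_div) auto
    then show ?thesis using Xf Xg sf by (simp add: \<mu>_def field_simps)
  qed (use level_f in simp)
  moreover have "q g \<le> \<mu> * sqrt (zipf \<delta> Nf g) - C" if "0 < q g"
  proof (cases "g = f")
    case False
    have "sqrt (zipf \<delta> Nf f) / (C + q f) \<le> sqrt (zipf \<delta> Nf g) / (C + q g)"
      using optimal_exchange[OF C opt f(1) g _ f(3) that] False Xf Xg sf
      by (intro sqrt_div_le_sqrt_div) auto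
    then show ?thesis using Xf Xg sf by (simp add: \<mu>_def field_simps)
  qed (use level_f in simp)
  moreover have "0 \<le> q g" "q g \<le> 1" using feasible_bounds[OF feas g] by auto
  ultimately show "q g = max 0 (min (\<mu> * sqrt (zipf \<delta> Nf g) - C) 1)"
    by (cases "q g = 0"; cases "q g = 1") auto
qed

lemma optimal_gap_strict_mono:
  assumes C: "0 < C" "C < C'"
    and opt: "is_optimal \<delta> Nf Nc C q" and opt': "is_optimal \<delta> Nf Nc C' q'"
    and \<delta>: "0 < \<delta>" and f: "1 \<le> f" "f < Nf"
    and q: "0 < q f" "q f < 1" "0 < q (Suc f)" "q (Suc f) < 1"
    and q': "0 < q' f" "q' f < 1" "0 < q' (Suc f)" "q' (Suc f) < 1"
  shows "q f - q (Suc f) < q' f - q' (Suc f)"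
proof -
  let ?s = "\<lambda>g. sqrt (zipf \<delta> Nf g)"
  have f_in: "f \<in> {1..Nf}" and Suc_f_in: "Suc f \<in> {1..Nf}" using f by auto
  obtain \<mu> where \<mu>: "\<And>g. g \<in> {1..Nf} \<Longrightarrow> q g = max 0 (min (\<mu> * ?s g - C) 1)"
    using optimal_water_filling[OF C(1) opt f_in q(1,2)] by blast
  obtain \<mu>' where \<mu>': "\<And>g. g \<in> {1..Nf} \<Longrightarrow> q' g = max 0 (min (\<mu>' * ?s g - C') 1)"
    using optimal_water_filling[OF _ opt' f_in q'(1,2)] C by auto
  have interior: "q g = \<mu> * ?s g - C" "q' g = \<mu>' * ?s g - C'"
    if "g \<in> {1..Nf}" "0 < q g" "q g < 1" "0 < q' g" "q' g < 1" for g
    using \<mu>[OF that(1)] \<mu>'[OF that(1)] that(2-5) by (auto simp: max_def min_def split: if_splits)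
  have "\<mu> < \<mu>'"
  proof (rule ccontr)
    assume "\<not> \<mu> < \<mu>'"
    then have "\<mu>' * ?s g \<le> \<mu> * ?s g" if "g \<in> {1..Nf}" for g
      using zipf_pos[of g Nf \<delta>] that by (intro mult_right_mono) auto
    then have level: "\<mu>' * ?s g - C' < \<mu> * ?s g - C" if "g \<in> {1..Nf}" for g
      using C(2) that by fastforce
    have "q' g \<le> q g" if "g \<in> {1..Nf}" for g
      using \<mu>[OF that] \<mu>'[OF that] level[OF that] by (simp add: max_def min_def)
    moreover have "q' f < q f" using interior[OF f_in q(1,2) q'(1,2)] level[OF f_in] by simp
    ultimately have "(\<Sum>g=1..Nf. q' g) < (\<Sum>g=1..Nf. q g)"
      using f_in by (intro sum_strict_mono_ex1) auto
    moreover have "(\<Sum>g=1..Nf. q' g) = real Nc"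
      using optimal_budget_binding[OF _ opt' f_in q'(2)] C by simp
    moreover have "(\<Sum>g=1..Nf. q g) \<le> real Nc"
      using opt by (simp add: is_optimal_def feasible_def)
    ultimately show False by simp
  qed
  moreover have "?s (Suc f) < ?s f" using zipf_Suc_less[of f Nf \<delta>] f \<delta> by simp
  ultimately have "\<mu> * (?s f - ?s (Suc f)) < \<mu>' * (?s f - ?s (Suc f))" by simp
  then show ?thesis
    using interior[OF f_in q(1,2) q'(1,2)] interior[OF Suc_f_in q(3,4) q'(3,4)]
    by (simp add: algebra_simps)
qed

lemma hyp2F1_C1_ge_one:
  assumes "2 < \<alpha>" "1 \<le> M1" "0 < B12" "0 < W" "0 \<le> R0"
  shows "1 \<le> hyp2F1 (-2 / \<alpha>) (real M1) (1 - 2 / \<alpha>) (- gamma0 R0 W / (real M1 * B12))"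
proof -
  have "1 \<le> (2::real) powr (R0 / W)" using assms by (intro ge_one_powr_ge_zero) auto
  then have "0 \<le> gamma0 R0 W / (real M1 * B12)" using assms by (simp add: gamma0_def)
  moreover have a: "-1 < -2 / \<alpha>" "-2 / \<alpha> < 0" using assms by (auto simp: field_simps)
  moreover have "1 \<le> real M1" using assms(2) by simp
  then have "1 + -2 / \<alpha> \<le> real M1" using a by linarith
  ultimately show ?thesis
    using hyp2F1_shift_ge_one[of "-2 / \<alpha>" "real M1" "- gamma0 R0 W / (real M1 * B12)"] by simp
qed

lemma C1_pos_strict_mono:
  assumes "2 < \<alpha>" "1 \<le> M1" "0 < B12" "0 < W" "0 \<le> R0"
    and lam: "0 < lam" "lam \<le> lam'" and P: "0 < P" "P \<le> P'" and strict: "lam < lam' \<or> P < P'"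
  shows "0 < C1 \<alpha> M1 B12 W R0 lam P" "C1 \<alpha> M1 B12 W R0 lam P < C1 \<alpha> M1 B12 W R0 lam' P'"
proof -
  let ?x = "(P * B12) powr (2 / \<alpha>)" and ?x' = "(P' * B12) powr (2 / \<alpha>)"
  have x: "0 < ?x" "?x \<le> ?x'" using assms by (auto intro: powr_mono2)
  have "lam * ?x < lam' * ?x'"
  proof (cases "lam < lam'")
    case True
    then show ?thesis using x lam by (intro mult_less_le_imp_less) auto
  next
    case False
    then have "?x < ?x'" using strict assms by (intro powr_less_mono2) auto
    then show ?thesis using lam by (intro mult_le_less_imp_less) auto
  qed
  moreover have "0 < lam * ?x" using lam x by simp
  ultimately show "0 < C1 \<alpha> M1 B12 W R0 lam P" "C1 \<alpha> M1 B12 W R0 lam P < C1 \<alpha> M1 B12 W R0 lam' P'"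
    using hyp2F1_C1_ge_one[OF assms(1-5)] by (simp_all add: C1_def)
qed

theorem corollary3:
  fixes Nf Nc M1 f :: nat
    and \<delta> \<alpha> B12 W R0 lam12 P12 lam12' P12' :: real
    and q q' :: "nat \<Rightarrow> real"
  assumes "1 \<le> Nc" "Nc \<le> Nf"
    and "\<delta> > 0" "\<alpha> > 2" "M1 \<ge> 1" "B12 > 0" "W > 0" "R0 \<ge> 0"
    and "lam12 > 0" "P12 > 0" "lam12' > 0" "P12' > 0"
    and "lam12 \<le> lam12'" "P12 \<le> P12'" "lam12 < lam12' \<or> P12 < P12'"
    and "is_optimal \<delta> Nf Nc (C1 \<alpha> M1 B12 W R0 lam12 P12) q"
    and "is_optimal \<delta> Nf Nc (C1 \<alpha> M1 B12 W R0 lam12' P12') q'"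
    and "1 \<le> f" "f \<le> Nf - 1"
    and "0 < q f" "q f < 1" "0 < q (f+1)" "q (f+1) < 1"
    and "0 < q' f" "q' f < 1" "0 < q' (f+1)" "q' (f+1) < 1"
  shows "q f - q (f+1) < q' f - q' (f+1)"
proof -
  have "0 < C1 \<alpha> M1 B12 W R0 lam12 P12"
    and "C1 \<alpha> M1 B12 W R0 lam12 P12 < C1 \<alpha> M1 B12 W R0 lam12' P12'"
    using C1_pos_strict_mono[of \<alpha> M1 B12 W R0 lam12 lam12' P12 P12'] assms by auto
  moreover have "f < Nf" using assms by linarith
  ultimately show ?thesis
    using optimal_gap_strict_mono[where q = q and q' = q'] assms by simp
qed

end
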